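(* Let $R$ be a commutative ring with unit, $X$ a set, $F\subseteq R\langle X\rangle$ and $f\in(F)$, the two-sided ideal generated by $F$. Then for every labelled quiver $Q$ with labels $X$ such that all elements of $F$ are uniformly compatible with $Q$, we have: $f$ is compatible with $Q$ if and only if $f$ is a $Q$-consequence of $F$.
   Context: $R\langle X\rangle$ is the free algebra of noncommutative polynomials over $R$ in indeterminates $X$, with monomials the words in $\langle X\rangle$ (including the empty word $1$); $\operatorname{supp}(f)$ is the set of monomials with nonzero coefficient. A labelled quiver $Q=(V,E,X,s,t,l)$ has vertices $V$, edges $E$, source/target maps $s,t:E\to V$ and labelling $l:E\to X$. A nonempty path $p=e_n\cdots e_1$ (with $s(e_{i+1})=t(e_i)$) has label $l(e_n)\cdots l(e_1)$, source $s(e_1)$, target $t(e_n)$; each vertex $v$ has an empty path with label $1$ and source and target $v$. For a monomial $m$, $\sigma(m)=\{(s(p),t(p)) : p \text{ a path with } l(p)=m\}$; for a polynomial $f$, $\sigma(f)=\bigcap_{m\in\operatorname{supp}(f)}\sigma(m)$ (so $\sigma(0)=V\times V$). $f$ is compatible with $Q$ if $\sigma(f)\neq\emptyset$, and uniformly compatible if it is compatible and all $m\in\operatorname{supp}(f)$ have the same set $\sigma(m)$; $R\langle X\rangle_Q$ is the set of uniformly compatible polynomials. For $F\subseteq R\langle X\rangle_Q$, a polynomial $f$ is a $Q$-consequence of $F$ if $f$ is compatible with $Q$ and there are finitely many $a_i,b_i\in R\langle X\rangle_Q$ and $f_i\in F$ with $f=\sum_i a_if_ib_i$ and $\sigma(a_if_ib_i)\supseteq\sigma(f)$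 for every $i$ (the empty sum is allowed). *)

theory Defs
  imports Main "HOL-Library.Poly_Mapping"
begin

text \<open>Noncommutative polynomials over R in indeterminates of type 'x:
  finitely supported maps from words ('x list, empty word = 1) to R.
  The first letter of a word is the leftmost factor.\<close>

type_synonym ('x, 'r) ncpoly = "'x list \<Rightarrow>\<^sub>0 'r"

definition nc_mult :: "('x, 'r::comm_ring_1) ncpoly \<Rightarrow> ('x, 'r) ncpoly \<Rightarrow> ('x, 'r) ncpoly" where
  "nc_mult a b = (\<Sum>u\<in>Poly_Mapping.keys a. \<Sum>v\<in>Poly_Mapping.keys b. Poly_Mapping.single (u @ v) (Poly_Mapping.lookup a u * Poly_Mapping.lookup b v))"

definition supp :: "('x, 'r::zero) ncpoly \<Rightarrow> 'x list set" where
  "supp f = Poly_Mapping.keys f"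

inductive_set nc_ideal :: "('x, 'r::comm_ring_1) ncpoly set \<Rightarrow> ('x, 'r) ncpoly set"
  for F where
  zero: "0 \<in> nc_ideal F"
| gen: "g \<in> F \<Longrightarrow> nc_mult (nc_mult a g) b \<in> nc_ideal F"
| add: "p \<in> nc_ideal F \<Longrightarrow> q \<in> nc_ideal F \<Longrightarrow> p + q \<in> nc_ideal F"

record ('v, 'e, 'x) quiver =
  verts :: "'v set"
  edges :: "'e set"
  src :: "'e \<Rightarrow> 'v"
  tgt :: "'e \<Rightarrow> 'v"
  lab :: "'e \<Rightarrow> 'x"

definition wf_quiver :: "('v, 'e, 'x) quiver \<Rightarrow> bool" where
  "wf_quiver Q \<longleftrightarrow> src Q ` edges Q \<subseteq> verts Q \<and> tgt Q ` edges Q \<subseteq> verts Q"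

text \<open>A nonempty path e_n ... e_1 is represented as the list [e_n, ..., e_1]:
  s(e_{i+1}) = t(e_i); label map l p; source s(last p); target t(hd p).\<close>
definition qpath :: "('v, 'e, 'x) quiver \<Rightarrow> 'e list \<Rightarrow> bool" where
  "qpath Q p \<longleftrightarrow> p \<noteq> [] \<and> set p \<subseteq> edges Q \<and>
     (\<forall>i. Suc i < length p \<longrightarrow> src Q (p ! i) = tgt Q (p ! Suc i))"

definition sigma_mon :: "('v, 'e, 'x) quiver \<Rightarrow> 'x list \<Rightarrow> ('v \<times> 'v) set" where
  "sigma_mon Q m =
     {(v, v) | v. v \<in> verts Q \<and> m = []} \<union>
     {(src Q (last p), tgt Q (hd p)) | p. qpath Q p \<and> map (lab Q) p = m}"

definition sigma :: "('v, 'e, 'x) quiver \<Rightarrow> ('x, 'r::zero) ncpoly \<Rightarrow> ('v \<times> 'v) set" where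
  "sigma Q f = (verts Q \<times> verts Q) \<inter> (\<Inter>m\<in>supp f. sigma_mon Q m)"

definition compatible :: "('v, 'e, 'x) quiver \<Rightarrow> ('x, 'r::zero) ncpoly \<Rightarrow> bool" where
  "compatible Q f \<longleftrightarrow> sigma Q f \<noteq> {}"

definition unif_compatible :: "('v, 'e, 'x) quiver \<Rightarrow> ('x, 'r::zero) ncpoly \<Rightarrow> bool" where
  "unif_compatible Q f \<longleftrightarrow> compatible Q f \<and>
     (\<forall>m\<in>supp f. \<forall>m'\<in>supp f. sigma_mon Q m = sigma_mon Q m')"

definition Q_consequence :: "('v, 'e, 'x) quiver \<Rightarrow> ('x, 'r::comm_ring_1) ncpoly set
    \<Rightarrow> ('x, 'r) ncpoly \<Rightarrow> bool" where
  "Q_consequence Q F f \<longleftrightarrow> compatible Q f \<and>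
     (\<exists>ts :: (('x, 'r) ncpoly \<times> ('x, 'r) ncpoly \<times> ('x, 'r) ncpoly) list.
        f = sum_list (map (\<lambda>(a, g, b). nc_mult (nc_mult a g) b) ts) \<and>
        (\<forall>(a, g, b) \<in> set ts. unif_compatible Q a \<and> unif_compatible Q b \<and> g \<in> F \<and>
            sigma Q f \<subseteq> sigma Q (nc_mult (nc_mult a g) b)))"

end

theory Submission
  imports Defs
begin

text \<open>
  By bilinearity of the product, every element of the ideal generated by \<open>F\<close> is a finite sum of
  terms \<open>c u g v d\<close> with words \<open>u\<close>, \<open>v\<close>, scalars \<open>c\<close>, \<open>d\<close> and \<open>g \<in> F\<close>. Since \<open>\<sigma>\<close> turns
  concatenation of words into composition of relations and \<open>g\<close> is uniformly compatible, all
  monomials of such a term have the same \<open>\<sigma>\<close>, which is therefore the \<open>\<sigma>\<close> of the term.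
  For compatible \<open>f\<close>, keep exactly the nonzero terms whose \<open>\<sigma>\<close> contains \<open>\<sigma>(f)\<close>. At a monomial
  \<open>m\<close> with \<open>\<sigma>(f) \<subseteq> \<sigma>(m)\<close> every term involving \<open>m\<close> is kept; at any other monomial \<open>f\<close> has
  coefficient zero and no kept term contributes. So the kept terms still sum to \<open>f\<close>, and since
  \<open>\<sigma>(f) \<noteq> {}\<close> their multipliers \<open>c u\<close> and \<open>v d\<close> have nonempty \<open>\<sigma>\<close>, i.e. are uniformly compatible.
\<close>

lemma nc_mult_eq_sum_superset:
  assumes "finite S" "Poly_Mapping.keys a \<subseteq> S" "finite T" "Poly_Mapping.keys b \<subseteq> T"
  shows "nc_mult a b = (\<Sum>u\<in>S. \<Sum>v\<in>T.
           Poly_Mapping.single (u @ v) (Poly_Mapping.lookup a u * Poly_Mapping.lookup b v))"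
proof -
  let ?m = "\<lambda>u v. Poly_Mapping.single (u @ v) (Poly_Mapping.lookup a u * Poly_Mapping.lookup b v)"
  have "(\<Sum>v\<in>Poly_Mapping.keys b. ?m u v) = (\<Sum>v\<in>T. ?m u v)" for u
    by (rule sum.mono_neutral_left) (use assms in \<open>auto simp: in_keys_iff\<close>)
  moreover have "(\<Sum>u\<in>Poly_Mapping.keys a. \<Sum>v\<in>T. ?m u v) = (\<Sum>u\<in>S. \<Sum>v\<in>T. ?m u v)"
    by (rule sum.mono_neutral_left) (use assms in \<open>auto simp: in_keys_iff\<close>)
  ultimately show ?thesis
    unfolding nc_mult_def by simp
qed

lemma nc_mult_add_left: "nc_mult (a + a') b = nc_mult a b + nc_mult a' b"
  using keys_add[of a a']
  by (subst (1 2 3) nc_mult_eq_sum_superset[where S = "Poly_Mapping.keys a \<union> Poly_Mapping.keys a'"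
        and T = "Poly_Mapping.keys b"])
     (auto simp: lookup_add distrib_right single_add sum.distrib)

lemma nc_mult_add_right: "nc_mult a (b + b') = nc_mult a b + nc_mult a b'"
  using keys_add[of b b']
  by (subst (1 2 3) nc_mult_eq_sum_superset[where S = "Poly_Mapping.keys a"
        and T = "Poly_Mapping.keys b \<union> Poly_Mapping.keys b'"])
     (auto simp: lookup_add distrib_left single_add sum.distrib)

lemma nc_mult_0_left [simp]: "nc_mult 0 b = 0"
  by (simp add: nc_mult_def)

lemma nc_mult_0_right [simp]: "nc_mult a 0 = 0"
  by (simp add: nc_mult_def)

lemma keys_nc_mult:
  "Poly_Mapping.keys (nc_mult a b) \<subseteq> {u @ v | u v. u \<in> Poly_Mapping.keys a \<and> v \<in> Poly_Mapping.keys b}"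
  unfolding nc_mult_def
  by (rule order.trans[OF keys_sum], rule UN_least, rule order.trans[OF keys_sum]) auto

lemma poly_mapping_single_add_induct [case_names zero single_add]:
  assumes "P 0" and "\<And>k c p. P p \<Longrightarrow> P (Poly_Mapping.single k c + p)"
  shows "P p"
proof (induction p rule: update_induct)
  case const
  show ?case by (fact assms(1))
next
  case (update p k c)
  have "Poly_Mapping.update k c p = Poly_Mapping.single k c + p"
    using update.hyps(1)
    by (intro poly_mapping_eqI) (auto simp: lookup_update lookup_add lookup_single in_keys_iff)
  with assms(2)[OF update.IH] show ?case by simp
qed

lemma lookup_sum_list:
  "Poly_Mapping.lookup (sum_list (map h xs)) m = sum_list (map (\<lambda>x. Poly_Mapping.lookup (h x) m) xs)"
  by (induction xs) (auto simp: lookup_add)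

lemma sum_list_filter_keys:
  fixes h :: "'a \<Rightarrow> 'k \<Rightarrow>\<^sub>0 'b::comm_monoid_add"
  assumes filter_iff: "\<And>t m. t \<in> set ts \<Longrightarrow> m \<in> Poly_Mapping.keys (h t) \<Longrightarrow> P t \<longleftrightarrow> A m"
    and keys_A: "\<And>m. m \<in> Poly_Mapping.keys (sum_list (map h ts)) \<Longrightarrow> A m"
  shows "sum_list (map h (filter P ts)) = sum_list (map h ts)"
proof (rule poly_mapping_eqI)
  fix m
  have lhs: "Poly_Mapping.lookup (sum_list (map h (filter P ts))) m
      = sum_list (map (\<lambda>t. if P t then Poly_Mapping.lookup (h t) m else 0) ts)"
    unfolding sum_list_map_filter' lookup_sum_list
    by (intro arg_cong[where f = sum_list] map_cong) auto
  show "Poly_Mapping.lookup (sum_list (map h (filter P ts))) m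
      = Poly_Mapping.lookup (sum_list (map h ts)) m"
  proof (cases "A m")
    case True
    then have "(if P t then Poly_Mapping.lookup (h t) m else 0) = Poly_Mapping.lookup (h t) m"
      if "t \<in> set ts" for t
      using filter_iff[OF that] by (auto simp: in_keys_iff)
    then show ?thesis
      by (simp only: lhs lookup_sum_list[of h ts] cong: map_cong)
  next
    case False
    then have "(if P t then Poly_Mapping.lookup (h t) m else 0) = 0" if "t \<in> set ts" for t
      using filter_iff[OF that] by (auto simp: in_keys_iff)
    moreover have "Poly_Mapping.lookup (sum_list (map h ts)) m = 0"
      using keys_A False by (auto simp: in_keys_iff)
    ultimately show ?thesis
      by (simp only: lhs sum_list_0 cong: map_cong)
  qed
qed

definition sandwich ::
    "('x, 'r::comm_ring_1) ncpoly \<times> ('x, 'r) ncpoly \<times> ('x, 'r) ncpoly \<Rightarrow> ('x, 'r) ncpoly"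
  where "sandwich = (\<lambda>(a, g, b). nc_mult (nc_mult a g) b)"

lemma sandwich_apply [simp]: "sandwich (a, g, b) = nc_mult (nc_mult a g) b"
  by (simp add: sandwich_def)

definition monomial_sandwiches ::
    "('x, 'r::comm_ring_1) ncpoly set \<Rightarrow> (('x, 'r) ncpoly \<times> ('x, 'r) ncpoly \<times> ('x, 'r) ncpoly) set"
  where "monomial_sandwiches F =
    {(Poly_Mapping.single u c, g, Poly_Mapping.single v d) | u c g v d. g \<in> F}"

definition sandwich_sums :: "('x, 'r::comm_ring_1) ncpoly set \<Rightarrow> ('x, 'r) ncpoly set"
  where "sandwich_sums F = {sum_list (map sandwich ts) | ts. set ts \<subseteq> monomial_sandwiches F}"

lemma monomial_sandwichesI:
  "g \<in> F \<Longrightarrow> (Poly_Mapping.single u c, g, Poly_Mapping.single v d) \<in> monomial_sandwiches F"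
  unfolding monomial_sandwiches_def by blast

lemma zero_in_sandwich_sums: "0 \<in> sandwich_sums F"
  unfolding sandwich_sums_def by (auto intro!: exI[of _ "[]"])

lemma add_in_sandwich_sums: "p \<in> sandwich_sums F \<Longrightarrow> q \<in> sandwich_sums F \<Longrightarrow> p + q \<in> sandwich_sums F"
  unfolding sandwich_sums_def by (clarsimp, metis map_append le_sup_iff set_append sum_list_append)

lemma sandwich_in_sandwich_sums:
  assumes "g \<in> F"
  shows "sandwich (a, g, b) \<in> sandwich_sums F"
proof (induction a rule: poly_mapping_single_add_induct)
  case zero
  show ?case by (simp add: zero_in_sandwich_sums)
next
  case (single_add u c a)
  have "sandwich (Poly_Mapping.single u c, g, b) \<in> sandwich_sums F"
  proof (induction b rule: poly_mapping_single_add_induct)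
    case zero
    show ?case by (simp add: zero_in_sandwich_sums)
  next
    case (single_add v d b)
    have "sandwich (Poly_Mapping.single u c, g, Poly_Mapping.single v d) \<in> sandwich_sums F"
      unfolding sandwich_sums_def
      by (rule CollectI, rule exI[of _ "[(Poly_Mapping.single u c, g, Poly_Mapping.single v d)]"])
        (simp add: monomial_sandwichesI[OF assms])
    with single_add.IH show ?case
      by (simp add: nc_mult_add_right add_in_sandwich_sums)
  qed
  with single_add.IH show ?case
    by (simp add: nc_mult_add_left add_in_sandwich_sums)
qed

lemma nc_ideal_subset_sandwich_sums: "nc_ideal F \<subseteq> sandwich_sums F"
proof
  fix f assume "f \<in> nc_ideal F"
  then show "f \<in> sandwich_sums F"
    by induction
      (auto simp: zero_in_sandwich_sums add_in_sandwich_sums dest: sandwich_in_sandwich_sums)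
qed

lemma keys_monomial_sandwich:
  "Poly_Mapping.keys (sandwich (Poly_Mapping.single u c, g, Poly_Mapping.single v d))
     \<subseteq> {u @ m @ v | m. m \<in> Poly_Mapping.keys g}"
  using keys_nc_mult[of "nc_mult (Poly_Mapping.single u c) g" "Poly_Mapping.single v d"]
    keys_nc_mult[of "Poly_Mapping.single u c" g]
  by (fastforce split: if_splits)

lemma qpath_Cons:
  "qpath Q (e # p) \<longleftrightarrow> e \<in> edges Q \<and> (p = [] \<or> qpath Q p \<and> src Q e = tgt Q (hd p))"
proof -
  have "qpath Q p \<longleftrightarrow> p \<noteq> [] \<and> set p \<subseteq> edges Q \<and> successively (\<lambda>e e'. src Q e = tgt Q e') p"
    for p
    unfolding qpath_def successively_conv_nth by auto
  then show ?thesis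
    by (cases p) auto
qed

lemma sigma_mon_subset_verts:
  assumes "wf_quiver Q"
  shows "sigma_mon Q m \<subseteq> verts Q \<times> verts Q"
proof -
  have "hd p \<in> edges Q \<and> last p \<in> edges Q" if "qpath Q p" for p
    using that unfolding qpath_def by auto
  with assms show ?thesis
    unfolding sigma_mon_def wf_quiver_def by blast
qed

lemma sigma_mon_Nil: "sigma_mon Q [] = Id_on (verts Q)"
  unfolding sigma_mon_def qpath_def by (auto simp: Id_on_iff)

lemma sigma_mon_single: "sigma_mon Q [x] = {(src Q e, tgt Q e) | e. e \<in> edges Q \<and> lab Q e = x}"
  unfolding sigma_mon_def by (force simp: qpath_Cons map_eq_Cons_conv)

lemma mem_sigma_mon_iff:
  "w \<noteq> [] \<Longrightarrow> (a, b) \<in> sigma_mon Q w \<longleftrightarrow>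
     (\<exists>p. qpath Q p \<and> map (lab Q) p = w \<and> a = src Q (last p) \<and> b = tgt Q (hd p))"
  unfolding sigma_mon_def by blast

lemma sigma_mon_Cons:
  assumes "wf_quiver Q"
  shows "sigma_mon Q (x # w) = sigma_mon Q w O sigma_mon Q [x]"
proof (cases "w = []")
  case True
  then show ?thesis
    using sigma_mon_subset_verts[OF assms, of "[x]"] by (auto simp: sigma_mon_Nil)
next
  case False
  show ?thesis
  proof (intro equalityI subsetI)
    fix z assume "z \<in> sigma_mon Q (x # w)"
    then obtain p e where "qpath Q (e # p)" "lab Q e = x" "map (lab Q) p = w"
      and z: "z = (src Q (last (e # p)), tgt Q e)"
      unfolding sigma_mon_def by (auto simp: map_eq_Cons_conv)
    with False have "(src Q (last p), src Q e) \<in> sigma_mon Q w" "(src Q e, tgt Q e) \<in> sigma_mon Q [x]"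
      by (auto simp: qpath_Cons mem_sigma_mon_iff sigma_mon_single)
    then show "z \<in> sigma_mon Q w O sigma_mon Q [x]"
      using z False \<open>map (lab Q) p = w\<close> by auto
  next
    fix z assume "z \<in> sigma_mon Q w O sigma_mon Q [x]"
    then obtain a b c where z: "z = (a, c)" and "(a, b) \<in> sigma_mon Q w" "(b, c) \<in> sigma_mon Q [x]"
      by blast
    then obtain p e where "qpath Q p" "map (lab Q) p = w" "a = src Q (last p)" "b = tgt Q (hd p)"
      and "e \<in> edges Q" "lab Q e = x" "b = src Q e" "c = tgt Q e"
      unfolding mem_sigma_mon_iff[OF False] sigma_mon_single by blast
    moreover from \<open>qpath Q p\<close> have "p \<noteq> []"
      by (simp add: qpath_def)
    ultimately have "qpath Q (e # p)"
      by (simp add: qpath_Cons)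
    then show "z \<in> sigma_mon Q (x # w)"
      unfolding z mem_sigma_mon_iff[of "x # w", OF list.distinct(2)]
      using \<open>p \<noteq> []\<close> \<open>map (lab Q) p = w\<close> \<open>lab Q e = x\<close> \<open>a = _\<close> \<open>c = _\<close>
      by (intro exI[of _ "e # p"]) simp
  qed
qed

text \<open>Paths are read from right to left, so the last letter of a word is traversed first.\<close>

lemma sigma_mon_append:
  assumes "wf_quiver Q"
  shows "sigma_mon Q (x @ y) = sigma_mon Q y O sigma_mon Q x"
proof (induction x)
  case Nil
  show ?case
    using sigma_mon_subset_verts[OF assms, of y] by (auto simp: sigma_mon_Nil)
next
  case (Cons a x)
  have "sigma_mon Q ((a # x) @ y) = sigma_mon Q (x @ y) O sigma_mon Q [a]"
    using sigma_mon_Cons[OF assms, of a "x @ y"] by simp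
  also have "\<dots> = sigma_mon Q y O sigma_mon Q (a # x)"
    unfolding Cons.IH sigma_mon_Cons[OF assms, of a x] by (rule O_assoc)
  finally show ?case .
qed

lemma sigma_subset_sigma_mon: "m \<in> Poly_Mapping.keys f \<Longrightarrow> sigma Q f \<subseteq> sigma_mon Q m"
  unfolding sigma_def supp_def by auto

lemma sigma_eq_sigma_mon_if_uniform:
  assumes "wf_quiver Q" and "m \<in> Poly_Mapping.keys f"
    and "\<And>m'. m' \<in> Poly_Mapping.keys f \<Longrightarrow> sigma_mon Q m' = sigma_mon Q m"
  shows "sigma Q f = sigma_mon Q m"
  using assms(2,3) sigma_mon_subset_verts[OF assms(1), of m] unfolding sigma_def supp_def by blast

lemma unif_compatible_single:
  assumes "wf_quiver Q" and "c \<noteq> 0" and "sigma_mon Q u \<noteq> {}"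
  shows "unif_compatible Q (Poly_Mapping.single u c)"
proof -
  have "sigma Q (Poly_Mapping.single u c) = sigma_mon Q u"
    using assms by (intro sigma_eq_sigma_mon_if_uniform) auto
  with assms show ?thesis
    unfolding unif_compatible_def compatible_def supp_def by simp
qed

lemma sigma_monomial_sandwich:
  assumes "wf_quiver Q" and "\<forall>g\<in>F. unif_compatible Q g"
    and "t \<in> monomial_sandwiches F" and "m \<in> Poly_Mapping.keys (sandwich t)"
  shows "sigma Q (sandwich t) = sigma_mon Q m"
proof (rule sigma_eq_sigma_mon_if_uniform[OF assms(1,4)])
  obtain u c g v d where t: "t = (Poly_Mapping.single u c, g, Poly_Mapping.single v d)" and "g \<in> F"
    using assms(3) unfolding monomial_sandwiches_def by blast
  then have g: "sigma_mon Q x = sigma_mon Q y" if "x \<in> Poly_Mapping.keys g" "y \<in> Poly_Mapping.keys g" for x y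
    using assms(2) that unfolding unif_compatible_def supp_def by blast
  have keys: "Poly_Mapping.keys (sandwich t) \<subseteq> {u @ x @ v | x. x \<in> Poly_Mapping.keys g}"
    unfolding t by (rule keys_monomial_sandwich)
  obtain x where "m = u @ x @ v" "x \<in> Poly_Mapping.keys g"
    using subsetD[OF keys assms(4)] by blast
  fix m' assume "m' \<in> Poly_Mapping.keys (sandwich t)"
  then obtain y where "m' = u @ y @ v" "y \<in> Poly_Mapping.keys g"
    using keys by blast
  with \<open>m = u @ x @ v\<close> \<open>x \<in> Poly_Mapping.keys g\<close> show "sigma_mon Q m' = sigma_mon Q m"
    using g[of y x] by (simp add: sigma_mon_append[OF assms(1)])
qed

lemma unif_compatible_monomial_multipliers:
  assumes "wf_quiver Q" and "(a, g, b) \<in> monomial_sandwiches F"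
    and "sandwich (a, g, b) \<noteq> 0" and "compatible Q (sandwich (a, g, b))"
  shows "unif_compatible Q a \<and> unif_compatible Q b"
proof -
  obtain u c v d where a: "a = Poly_Mapping.single u c" and b: "b = Poly_Mapping.single v d"
    using assms(2) unfolding monomial_sandwiches_def by blast
  with assms(3) have "c \<noteq> 0" "d \<noteq> 0"
    by auto
  from assms(3) obtain m where m: "m \<in> Poly_Mapping.keys (sandwich (a, g, b))"
    by fastforce
  with keys_monomial_sandwich obtain x where "m = u @ x @ v"
    unfolding a b by blast
  with assms(4) sigma_subset_sigma_mon[OF m, of Q]
  have "sigma_mon Q v O sigma_mon Q x O sigma_mon Q u \<noteq> {}"
    unfolding compatible_def by (auto simp: sigma_mon_append[OF assms(1)])
  then have "sigma_mon Q u \<noteq> {}" "sigma_mon Q v \<noteq> {}"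
    by auto
  with \<open>c \<noteq> 0\<close> \<open>d \<noteq> 0\<close> show ?thesis
    unfolding a b by (simp add: unif_compatible_single[OF assms(1)])
qed

lemma Q_consequence_sum_monomial_sandwiches:
  fixes ts :: "(('x, 'r::comm_ring_1) ncpoly \<times> ('x, 'r) ncpoly \<times> ('x, 'r) ncpoly) list"
  assumes wf: "wf_quiver Q" and uniform: "\<forall>g\<in>F. unif_compatible Q g"
    and ts: "set ts \<subseteq> monomial_sandwiches F"
    and "compatible Q (sum_list (map sandwich ts))"
  shows "Q_consequence Q F (sum_list (map sandwich ts))"
proof -
  define f where "f = sum_list (map sandwich ts)"
  with assms(4) have compatible: "compatible Q f"
    by simp
  define relevant :: "('x, 'r) ncpoly \<times> ('x, 'r) ncpoly \<times> ('x, 'r) ncpoly \<Rightarrow> bool"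
    where "relevant t \<longleftrightarrow> sandwich t \<noteq> 0 \<and> sigma Q f \<subseteq> sigma Q (sandwich t)" for t
  have decomposition: "f = sum_list (map sandwich (filter relevant ts))"
    unfolding f_def
  proof (rule sum_list_filter_keys[where A = "\<lambda>m. sigma Q f \<subseteq> sigma_mon Q m", symmetric])
    fix t m assume "t \<in> set ts" "m \<in> Poly_Mapping.keys (sandwich t)"
    with ts show "relevant t \<longleftrightarrow> sigma Q f \<subseteq> sigma_mon Q m"
      unfolding relevant_def using sigma_monomial_sandwich[OF wf uniform] by fastforce
  qed (simp add: sigma_subset_sigma_mon flip: f_def)
  have multipliers: "unif_compatible Q a \<and> unif_compatible Q b \<and> g \<in> F \<and>
      sigma Q f \<subseteq> sigma Q (sandwich (a, g, b))" if "(a, g, b) \<in> set (filter relevant ts)" for a g b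
  proof -
    from that ts have "(a, g, b) \<in> monomial_sandwiches F" and "relevant (a, g, b)"
      by auto
    with compatible show ?thesis
      using unif_compatible_monomial_multipliers[OF wf]
      unfolding relevant_def compatible_def monomial_sandwiches_def by blast
  qed
  show ?thesis
    unfolding Q_consequence_def sandwich_def[symmetric] f_def[symmetric]
    using compatible decomposition multipliers by (intro conjI exI[of _ "filter relevant ts"]) auto
qed

theorem corollary4p3:
  fixes F :: "('x, 'r::comm_ring_1) ncpoly set"
    and f :: "('x, 'r) ncpoly"
    and Q :: "('v, 'e, 'x) quiver"
  assumes "f \<in> nc_ideal F"
    and "wf_quiver Q"
    and "\<forall>g\<in>F. unif_compatible Q g"
  shows "compatible Q f \<longleftrightarrow> Q_consequence Q F f"
proof
  assume "Q_consequence Q F f"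
  then show "compatible Q f"
    unfolding Q_consequence_def by simp
next
  assume "compatible Q f"
  moreover obtain ts where "set ts \<subseteq> monomial_sandwiches F" and "f = sum_list (map sandwich ts)"
    using nc_ideal_subset_sandwich_sums assms(1) unfolding sandwich_sums_def by blast
  ultimately show "Q_consequence Q F f"
    using Q_consequence_sum_monomial_sandwiches[OF assms(2,3)] by simp
qed

end
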